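(* Let $F\in\mathbb{C}[x]$ be a polynomial of degree $n\ge 2$ with roots $z_1,\ldots,z_n$ (listed with multiplicity). Let $k$ be an integer with $0\le k\le n$, let $K\in\mathbb{R}$ with $K\ge 1$, and let $c_1,c_2$ be real numbers satisfying \[ c_2\cdot n\cdot \ln\!\Big(\frac{1+2K}{2K}\Big)\;\ge\; c_1\cdot n\;\ge\;\frac{\max(1,k)}{\ln\!\big(1+\frac{1}{8K}\big)}. \] Let $\Delta=\Delta(m,r)$ be a disk and suppose there is a real $\lambda$ with \[ \lambda\ge\max\big(4c_2\cdot \max(1,k)\cdot n^3,\;16K\cdot\max(1,k)^2\cdot n\big) \] such that $\Delta$ is $(1,\lambda)$-isolating for the roots $z_1,\ldots,z_k$ of $F$. Then $T_k(c_1n\cdot\Delta,K,F)$ holds, i.e. \[ \left|\frac{F^{(k)}(m)(c_1nr)^k}{k!}\right|>K\sum_{i\ne k}\left|\frac{F^{(i)}(m)(c_1nr)^i}{i!}\right|. \]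
   Context: $\Delta(m,r)$ denotes the open disk in $\mathbb{C}$ with center $m$ and radius $r>0$, and $\lambda\cdot\Delta(m,r):=\Delta(m,\lambda r)$ for $\lambda>0$. For $0<\rho_1\le 1\le\rho_2$ and a set $S$ of roots of $F$ (counted with multiplicity), a disk $\Delta$ is called $(\rho_1,\rho_2)$-isolating for $S$ if $\rho_1\cdot\Delta$ contains exactly the roots in $S$ (with multiplicity) and $\rho_2\cdot\Delta\setminus\rho_1\cdot\Delta$ contains no root of $F$. For a disk $\Delta(m,r)$, $K\ge 1$ and $0\le k\le n$, the predicate $T_k(\Delta(m,r),K,F)$ (also written $T_k(m,r,K,F)$) holds iff $\left|\frac{F^{(k)}(m) r^k}{k!}\right|>K\sum_{i\neq k}\left|\frac{F^{(i)}(m)r^i}{i!}\right|$, the sum ranging over $i\in\{0,\ldots,n\}\setminus\{k\}$. *)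

theory Defs
  imports "HOL-Analysis.Analysis" "HOL-Computational_Algebra.Computational_Algebra"
begin

text \<open>The open disk Delta(m,r) is ball m r; rho * Delta(m,r) = Delta(m, rho*r).
  F^(i)(m) is poly ((pderiv ^^ i) F) m.\<close>

definition T_pred :: "nat \<Rightarrow> complex \<Rightarrow> real \<Rightarrow> real \<Rightarrow> complex poly \<Rightarrow> bool" where
  "T_pred k m r K F \<longleftrightarrow>
     norm (poly ((pderiv ^^ k) F) m * of_real (r ^ k) / of_nat (fact k)) >
     K * (\<Sum>i\<in>{0..degree F} - {k}. norm (poly ((pderiv ^^ i) F) m * of_real (r ^ i) / of_nat (fact i)))"

definition isolating :: "complex poly \<Rightarrow> complex multiset \<Rightarrow> complex \<Rightarrow> real \<Rightarrow> real \<Rightarrow> real \<Rightarrow> bool" where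
  "isolating F S m r rho1 rho2 \<longleftrightarrow>
     filter_mset (\<lambda>z. z \<in> ball m (rho1 * r)) (proots F) = S \<and>
     (\<forall>z. poly F z = 0 \<longrightarrow> z \<notin> ball m (rho2 * r) - ball m (rho1 * r))"

end

theory Submission
  imports Defs
begin

(* Put R = c1 n r. The Taylor coefficients F^(i)(m) R^i / i! are the coefficients of
   G = F o (m + R x), and T_k says that the k-th coefficient of G dominates K times the others.
   Splitting the roots into the k inner ones and the outer ones, G is a nonzero multiple of g * h,
   where g = prod (x + (m - z)/R) over the inner roots is monic of degree k and
   h = prod (1 + R/(m - z) x) over the outer roots has constant term 1. The l1-norm of the
   coefficient vector is submultiplicative, and the hypotheses on c1, c2 and lambda make both
   |g|_1 and |h|_1 at most 1 + 1/(8K), because the inner roots are small and the outer ones large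
   compared with R. Hence g * h is x^k plus a perturbation of l1-norm about 3/(8K), which leaves
   the k-th coefficient dominant. *)

definition coeff_norm1 :: "'a::real_normed_vector poly \<Rightarrow> real" where
  "coeff_norm1 p = (\<Sum>i\<le>degree p. norm (coeff p i))"

lemma coeff_norm1_nonneg: "0 \<le> coeff_norm1 p"
  by (simp add: coeff_norm1_def sum_nonneg)

lemma coeff_norm1_eq_sum:
  assumes "finite I" "{..degree p} \<subseteq> I"
  shows "coeff_norm1 p = (\<Sum>i\<in>I. norm (coeff p i))"
  unfolding coeff_norm1_def using assms by (intro sum.mono_neutral_left) (auto simp: coeff_eq_0)

lemma sum_norm_coeff_le_coeff_norm1:
  assumes "finite I"
  shows "(\<Sum>i\<in>I. norm (coeff p i)) \<le> coeff_norm1 p"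
proof -
  have "(\<Sum>i\<in>I. norm (coeff p i)) \<le> (\<Sum>i\<in>I \<union> {..degree p}. norm (coeff p i))"
    using assms by (intro sum_mono2) auto
  also have "\<dots> = coeff_norm1 p"
    using assms by (intro coeff_norm1_eq_sum[symmetric]) auto
  finally show ?thesis .
qed

lemma poly_map_poly_norm_one: "poly (map_poly norm p) 1 = coeff_norm1 p"
proof -
  have "poly (map_poly norm p) 1 = (\<Sum>i\<le>degree p. coeff (map_poly norm p) i)"
    by (simp add: poly_altdef degree_map_poly)
  then show ?thesis by (simp add: coeff_norm1_def coeff_map_poly)
qed

lemma coeff_norm1_mult:
  fixes p q :: "'a::{comm_semiring_0, real_normed_algebra} poly"
  shows "coeff_norm1 (p * q) \<le> coeff_norm1 p * coeff_norm1 q"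
proof -
  define A B where "A = map_poly norm p" and "B = map_poly norm q"
  define N where "N = degree p + degree q"
  have "coeff_norm1 (p * q) = (\<Sum>n\<le>N. norm (coeff (p * q) n))"
    using degree_mult_le[of p q] by (intro coeff_norm1_eq_sum) (auto simp: N_def)
  also have "\<dots> \<le> (\<Sum>n\<le>N. coeff (A * B) n)"
    unfolding coeff_mult A_def B_def
    by (intro sum_mono order_trans[OF norm_sum] sum_mono) (simp add: coeff_map_poly norm_mult_ineq)
  also have "\<dots> = poly (A * B) 1"
  proof -
    have "degree (A * B) \<le> N"
      using degree_mult_le[of A B] by (simp add: N_def A_def B_def degree_map_poly)
    then show ?thesis
      by (simp add: poly_altdef) (intro sum.mono_neutral_right, auto simp: coeff_eq_0)
  qed
  finally show ?thesis by (simp add: A_def B_def poly_map_poly_norm_one)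
qed

lemma coeff_norm1_monom: "coeff_norm1 (monom c k) = norm c"
proof (cases "c = 0")
  case False
  have "coeff_norm1 (monom c k) = (\<Sum>i\<le>k. if i = k then norm c else 0)"
    using False unfolding coeff_norm1_def degree_monom_eq[OF False]
    by (intro sum.cong) (auto simp: coeff_monom)
  then show ?thesis by simp
qed (simp add: coeff_norm1_def)

lemma coeff_norm1_linear: "coeff_norm1 [:a, b:] = norm a + norm b"
  by (cases "b = 0") (simp_all add: coeff_norm1_def)

lemma coeff_norm1_minus_monom_coeff:
  "coeff_norm1 (p - monom (coeff p k) k) = coeff_norm1 p - norm (coeff p k)"
proof (cases "coeff p k = 0")
  case False
  then have k: "k \<le> degree p" by (rule le_degree)
  have "coeff_norm1 (p - monom (coeff p k) k) = (\<Sum>i\<le>degree p. norm (coeff (p - monom (coeff p k) k) i))"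
    using degree_diff_le[OF order.refl order.trans[OF degree_monom_le k]]
    by (intro coeff_norm1_eq_sum) auto
  also have "\<dots> = (\<Sum>i\<in>{..degree p} - {k}. norm (coeff p i))"
    using k by (subst sum.remove[of _ k]) (auto simp: coeff_monom intro!: sum.cong)
  also have "\<dots> = coeff_norm1 p - norm (coeff p k)"
    using k by (simp add: coeff_norm1_def sum_diff1)
  finally show ?thesis .
qed simp

lemma coeff_norm1_prod_mset_le_power:
  fixes f :: "'b \<Rightarrow> 'a::{comm_semiring_1, real_normed_algebra_1} poly"
  assumes "\<And>x. x \<in># M \<Longrightarrow> coeff_norm1 (f x) \<le> b"
  shows "coeff_norm1 (\<Prod>x\<in>#M. f x) \<le> b ^ size M"
  using assms
proof (induction M)
  case empty
  show ?case by (simp add: coeff_norm1_def)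
next
  case (add x M)
  have "coeff_norm1 (\<Prod>x\<in>#add_mset x M. f x) \<le> coeff_norm1 (f x) * coeff_norm1 (\<Prod>x\<in>#M. f x)"
    by (simp add: coeff_norm1_mult)
  also have "\<dots> \<le> b * b ^ size M"
    using add by (intro mult_mono) (auto intro: coeff_norm1_nonneg order_trans[OF coeff_norm1_nonneg])
  finally show ?case by simp
qed

lemma coeff_mult_dominant:
  fixes g h :: "'a::{comm_ring_1, real_normed_algebra_1} poly"
  assumes gk: "coeff g k = 1" and h0: "coeff h 0 = 1"
    and g: "coeff_norm1 g \<le> 1 + \<epsilon>" and h: "coeff_norm1 h \<le> 1 + \<epsilon>"
    and K: "K \<ge> 1" "K * \<epsilon> \<le> 1 / 8" and I: "finite I"
  shows "K * (\<Sum>i\<in>I - {k}. norm (coeff (g * h) i)) < norm (coeff (g * h) k)"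
proof -
  define g' where "g' = g - monom 1 k"
  define h' where "h' = h - 1"
  have g': "coeff_norm1 g' \<le> \<epsilon>"
    using g coeff_norm1_minus_monom_coeff[of g k] by (simp add: g'_def gk)
  have h': "coeff_norm1 h' \<le> \<epsilon>"
    using h coeff_norm1_minus_monom_coeff[of h 0] by (simp add: h'_def h0 one_pCons monom_0)
  have \<epsilon>: "0 \<le> \<epsilon>" using g' coeff_norm1_nonneg order_trans by blast
  have g'h: "coeff_norm1 (g' * h) \<le> \<epsilon> * (1 + \<epsilon>)"
    using coeff_norm1_mult[of g' h] g' h \<epsilon>
    by (meson coeff_norm1_nonneg mult_mono order_trans)
  have monom_h': "coeff_norm1 (monom 1 k * h') \<le> \<epsilon>"
    using coeff_norm1_mult[of "monom 1 k" h'] h' by (simp add: coeff_norm1_monom)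
  have gh: "g * h = monom 1 k + monom 1 k * h' + g' * h"
    by (simp add: g'_def h'_def algebra_simps)
  have "coeff (g * h) k = 1 + coeff (g' * h) k"
    by (simp add: gh coeff_monom_mult h'_def h0)
  then have "1 - norm (coeff (g' * h) k) \<le> norm (coeff (g * h) k)"
    using norm_diff_ineq[of 1 "coeff (g' * h) k"] by simp
  moreover have "norm (coeff (g' * h) k) \<le> \<epsilon> * (1 + \<epsilon>)"
    using sum_norm_coeff_le_coeff_norm1[of "{k}" "g' * h"] g'h by simp
  ultimately have lower: "1 - \<epsilon> * (1 + \<epsilon>) \<le> norm (coeff (g * h) k)"
    by linarith
  have "(\<Sum>i\<in>I - {k}. norm (coeff (g * h) i))
      \<le> (\<Sum>i\<in>I - {k}. norm (coeff (monom 1 k * h') i) + norm (coeff (g' * h) i))"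
    by (intro sum_mono) (simp add: gh coeff_monom norm_triangle_ineq)
  also have "\<dots> \<le> coeff_norm1 (monom 1 k * h') + coeff_norm1 (g' * h)"
    unfolding sum.distrib using I by (intro add_mono sum_norm_coeff_le_coeff_norm1) auto
  finally have upper: "(\<Sum>i\<in>I - {k}. norm (coeff (g * h) i)) \<le> \<epsilon> + \<epsilon> * (1 + \<epsilon>)"
    using monom_h' g'h by linarith
  have "\<epsilon> \<le> K * \<epsilon>" using mult_right_mono[OF K(1) \<epsilon>] by simp
  then have "\<epsilon> * \<epsilon> \<le> \<epsilon> / 8" "K * \<epsilon> * \<epsilon> \<le> \<epsilon> / 8"
    using K(2) \<epsilon> mult_right_mono[OF K(2) \<epsilon>] mult_right_mono[of \<epsilon> "1/8" \<epsilon>] by auto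
  then have "K * (\<epsilon> + \<epsilon> * (1 + \<epsilon>)) < 1 - \<epsilon> * (1 + \<epsilon>)"
    using K \<open>\<epsilon> \<le> K * \<epsilon>\<close> by (simp add: algebra_simps)
  moreover have "K * (\<Sum>i\<in>I - {k}. norm (coeff (g * h) i)) \<le> K * (\<epsilon> + \<epsilon> * (1 + \<epsilon>))"
    using upper K(1) by (intro mult_left_mono) auto
  ultimately show ?thesis using lower by linarith
qed

lemma higher_pderiv_pcompose_linear:
  fixes p :: "'a::field_char_0 poly"
  shows "(pderiv ^^ i) (p \<circ>\<^sub>p [:a, b:]) = smult (b ^ i) ((pderiv ^^ i) p \<circ>\<^sub>p [:a, b:])"
proof (induction i)
  case (Suc i)
  have "pderiv [:a, b:] = [:b:]" by (simp add: pderiv_pCons)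
  with Suc show ?case by (simp add: pderiv_smult pderiv_pcompose mult.commute)
qed simp

lemma coeff_pcompose_linear:
  fixes p :: "'a::field_char_0 poly"
  shows "coeff (p \<circ>\<^sub>p [:a, b:]) i = poly ((pderiv ^^ i) p) a * b ^ i / fact i"
proof -
  have "fact i * coeff (p \<circ>\<^sub>p [:a, b:]) i = coeff ((pderiv ^^ i) (p \<circ>\<^sub>p [:a, b:])) 0"
    by (simp add: coeff_higher_pderiv pochhammer_fact)
  also have "\<dots> = b ^ i * poly ((pderiv ^^ i) p) a"
    by (simp add: higher_pderiv_pcompose_linear)
  finally show ?thesis by (simp add: field_simps)
qed

lemma T_pred_iff_coeff_pcompose:
  "T_pred k m R K F \<longleftrightarrow>
     K * (\<Sum>i\<in>{0..degree F} - {k}. norm (coeff (F \<circ>\<^sub>p [:m, of_real R:]) i))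
       < norm (coeff (F \<circ>\<^sub>p [:m, of_real R:]) k)"
  by (simp add: T_pred_def coeff_pcompose_linear of_real_power)

lemma dominant_coeff_smult_iff:
  fixes p :: "'a::real_normed_field poly"
  assumes "c \<noteq> 0"
  shows "K * (\<Sum>i\<in>I. norm (coeff (smult c p) i)) < norm (coeff (smult c p) k)
     \<longleftrightarrow> K * (\<Sum>i\<in>I. norm (coeff p i)) < norm (coeff p k)"
  using assms by (simp add: norm_mult sum_distrib_left[symmetric] mult.left_commute)

lemma pcompose_prod_mset: "(\<Prod>x\<in>#M. f x) \<circ>\<^sub>p q = (\<Prod>x\<in>#M. f x \<circ>\<^sub>p q)"
  by (induction M) (simp_all add: pcompose_1 pcompose_mult)

lemma prod_mset_smult: "(\<Prod>x\<in>#M. smult (a x) (f x)) = smult (\<Prod>x\<in>#M. a x) (\<Prod>x\<in>#M. f x)"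
  by (induction M) (simp_all add: mult_smult_left mult_smult_right mult.commute)

lemma pcompose_linear_factorization:
  fixes F :: "complex poly"
  assumes roots: "proots F = S + T" and R: "R \<noteq> 0" and T: "\<And>z. z \<in># T \<Longrightarrow> z \<noteq> m"
  shows "F \<circ>\<^sub>p [:m, R:] = smult (lead_coeff F * R ^ size S * (\<Prod>z\<in>#T. m - z))
           ((\<Prod>z\<in>#S. [:(m - z) / R, 1:]) * (\<Prod>z\<in>#T. [:1, R / (m - z):]))"
proof -
  have "F \<circ>\<^sub>p [:m, R:] = smult (lead_coeff F) (\<Prod>z\<in>#proots F. [:-z, 1:]) \<circ>\<^sub>p [:m, R:]"
    by (simp only: complex_poly_decompose_multiset)
  also have "\<dots> = smult (lead_coeff F) ((\<Prod>z\<in>#S. [:m - z, R:]) * (\<Prod>z\<in>#T. [:m - z, R:]))"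
    by (simp add: roots pcompose_smult pcompose_mult pcompose_prod_mset pcompose_pCons)
  also have "(\<Prod>z\<in>#S. [:m - z, R:]) = (\<Prod>z\<in>#S. smult R [:(m - z) / R, 1:])"
    using R by (intro arg_cong[where f = prod_mset] image_mset_cong) simp
  also have "(\<Prod>z\<in>#T. [:m - z, R:]) = (\<Prod>z\<in>#T. smult (m - z) [:1, R / (m - z):])"
    using T by (intro arg_cong[where f = prod_mset] image_mset_cong) fastforce
  finally show ?thesis
    by (simp only: prod_mset_smult prod_mset_constant mult_smult_left mult_smult_right smult_smult mult_ac)
qed

lemma monic_prod_mset_linear:
  fixes a :: "'b \<Rightarrow> 'a::idom"
  shows "degree (\<Prod>x\<in>#M. [:a x, 1:]) = size M \<and> lead_coeff (\<Prod>x\<in>#M. [:a x, 1:]) = 1"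
proof (induction M)
  case (add x M)
  define P where "P = (\<Prod>x\<in>#M. [:a x, 1:])"
  have "P \<noteq> 0" using add.IH by (auto simp: P_def)
  then have "degree ([:a x, 1:] * P) = Suc (size M)"
    using add.IH by (subst degree_mult_eq) (auto simp: P_def)
  moreover have "lead_coeff ([:a x, 1:] * P) = 1"
    by (simp only: lead_coeff_mult P_def add.IH[THEN conjunct2]) simp
  ultimately show ?case
    by (simp only: P_def prod_mset.add_mset image_mset_add_mset size_add_mset)
qed simp

lemma coeff_norm1_inner_factor:
  fixes S :: "'a::real_normed_field multiset"
  assumes "R > 0" and "\<And>z. z \<in># S \<Longrightarrow> norm (m - z) \<le> \<rho>"
  shows "coeff_norm1 (\<Prod>z\<in>#S. [:(m - z) / of_real R, 1:]) \<le> (1 + \<rho> / R) ^ size S"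
proof (rule coeff_norm1_prod_mset_le_power)
  fix z assume "z \<in># S"
  then show "coeff_norm1 [:(m - z) / of_real R, 1:] \<le> 1 + \<rho> / R"
    using assms by (simp add: coeff_norm1_linear norm_divide divide_right_mono)
qed

lemma coeff_norm1_outer_factor:
  fixes T :: "'a::real_normed_field multiset"
  assumes "R > 0" "\<rho> > 0" and "\<And>z. z \<in># T \<Longrightarrow> \<rho> \<le> norm (m - z)"
  shows "coeff_norm1 (\<Prod>z\<in>#T. [:1, of_real R / (m - z):]) \<le> (1 + R / \<rho>) ^ size T"
proof (rule coeff_norm1_prod_mset_le_power)
  fix z assume "z \<in># T"
  then have "\<rho> \<le> norm (m - z)" by (rule assms(3))
  then have "R / norm (m - z) \<le> R / \<rho>"
    using assms(1,2) by (intro divide_left_mono mult_pos_pos) auto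
  then show "coeff_norm1 [:1, of_real R / (m - z):] \<le> 1 + R / \<rho>"
    using assms(1) by (simp add: coeff_norm1_linear norm_divide)
qed

lemma isolating_proots_split:
  assumes "isolating F S m r 1 lam" "F \<noteq> 0"
  obtains T where "proots F = S + T" "\<And>z. z \<in># S \<Longrightarrow> norm (m - z) < r"
    "\<And>z. z \<in># T \<Longrightarrow> lam * r \<le> norm (m - z)"
proof
  let ?inside = "\<lambda>z. z \<in> ball m r"
  have S: "filter_mset ?inside (proots F) = S"
    using assms(1) by (simp add: isolating_def)
  show "proots F = S + filter_mset (Not \<circ> ?inside) (proots F)"
    unfolding S[symmetric] by (simp add: multiset_partition comp_def)
  show "norm (m - z) < r" if "z \<in># S" for z
    using that unfolding S[symmetric] by (simp add: dist_norm)
  show "lam * r \<le> norm (m - z)" if "z \<in># filter_mset (Not \<circ> ?inside) (proots F)" for z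
    using that assms unfolding isolating_def by (auto simp: dist_norm)
qed

lemma power_one_plus_le_if_mult_le_ln:
  fixes x y :: real
  assumes "0 \<le> x" "real N * x \<le> ln y" "0 < y"
  shows "(1 + x) ^ N \<le> y"
proof -
  have "(1 + x) ^ N \<le> exp x ^ N"
    using assms(1) by (intro power_mono) auto
  also have "\<dots> = exp (real N * x)" by (simp add: exp_of_nat_mult)
  also have "\<dots> \<le> y" using assms(2,3) by (metis exp_le_cancel_iff exp_ln)
  finally show ?thesis .
qed

lemma ln_one_plus_ge_half:
  fixes t :: real
  assumes "0 \<le> t" "t \<le> 1 / 2"
  shows "t / 2 \<le> ln (1 + t)"
proof -
  have "t * t \<le> t / 2" using assms mult_left_mono[of t "1/2" t] by simp
  then show ?thesis using ln_one_plus_pos_lower_bound[of t] assms by (simp add: power2_eq_square)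
qed

lemma inner_factor_constant_bound:
  fixes K s :: real
  assumes K: "K \<ge> 1" and s: "s \<ge> real (max 1 k) / ln (1 + 1 / (8 * K))"
  shows "0 < s" and "(1 + 1 / s) ^ k \<le> 1 + 1 / (8 * K)"
proof -
  have L: "ln (1 + 1 / (8 * K)) > 0" using K by (intro ln_gt_zero) simp
  moreover have "real (max 1 k) \<ge> 1" by simp
  ultimately show "0 < s" using s by (smt (verit) divide_pos_pos)
  moreover have "real k \<le> s * ln (1 + 1 / (8 * K))"
    using s L by (simp add: pos_divide_le_eq)
  ultimately have "real k * (1 / s) \<le> ln (1 + 1 / (8 * K))"
    by (simp add: field_simps)
  then show "(1 + 1 / s) ^ k \<le> 1 + 1 / (8 * K)"
    using \<open>0 < s\<close> K by (intro power_one_plus_le_if_mult_le_ln) (auto intro: add_pos_pos)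
qed

lemma outer_factor_constant_bound:
  fixes K c1 c2 lam :: real and n k N :: nat
  assumes K: "K \<ge> 1" and n: "n \<ge> 2" and c1: "c1 > 0"
    and c2c1: "c2 * real n * ln ((1 + 2 * K) / (2 * K)) \<ge> c1 * real n"
    and lam: "lam \<ge> 4 * c2 * real (max 1 k) * real n ^ 3" and N: "N \<le> n"
  shows "(1 + c1 * real n / lam) ^ N \<le> 1 + 1 / (8 * K)"
proof -
  have "(1 + 2 * K) / (2 * K) = 1 + 1 / (2 * K)" using K by (simp add: field_simps)
  then have L: "0 < ln ((1 + 2 * K) / (2 * K))" "ln ((1 + 2 * K) / (2 * K)) \<le> 1 / (2 * K)"
    using K ln_add_one_self_le_self[of "1 / (2 * K)"] by (auto intro: ln_gt_zero)
  have "c1 \<le> c2 * ln ((1 + 2 * K) / (2 * K))" using c2c1 n by (simp add: mult.commute mult.left_commute)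
  moreover from this have c2: "0 < c2"
    using c1 L(1) by (smt (verit) zero_less_mult_iff)
  ultimately have c1c2: "c1 \<le> c2 / (2 * K)"
    using mult_left_mono[OF L(2), of c2] by simp
  have "4 * c2 * real n ^ 3 * 1 \<le> 4 * c2 * real n ^ 3 * real (max 1 k)"
    using c2 by (intro mult_left_mono) auto
  then have lam4: "4 * c2 * real n ^ 3 \<le> lam" using lam by (simp add: mult_ac)
  moreover have "0 < 4 * c2 * real n ^ 3" using c2 n by simp
  ultimately have lam': "0 < lam" "c1 * real n ^ 2 / lam \<le> c1 * real n ^ 2 / (4 * c2 * real n ^ 3)"
    using c1 by (auto intro!: divide_left_mono)
  have "real N * (c1 * real n / lam) \<le> real n * (c1 * real n / lam)"
    using N c1 lam' by (intro mult_right_mono) auto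
  also have "\<dots> \<le> c1 / (4 * c2 * real n)"
    using lam' n by (simp add: power2_eq_square power3_eq_cube mult_ac)
  also have "\<dots> \<le> 1 / (8 * K * real n)"
    using c1c2 c2 n K by (simp add: divide_simps mult_ac)
  also have "\<dots> \<le> (1 / (8 * K)) / 2"
    using n K by (simp add: divide_simps)
  also have "\<dots> \<le> ln (1 + 1 / (8 * K))"
    using K by (intro ln_one_plus_ge_half) auto
  finally show ?thesis
    using c1 lam' K by (intro power_one_plus_le_if_mult_le_ln) (auto intro: add_pos_pos)
qed

lemma T_pred_of_proots_split:
  fixes F :: "complex poly"
  assumes roots: "proots F = S + T" and F: "F \<noteq> 0" and R: "R > 0" and K: "K \<ge> 1"
    and S: "\<And>z. z \<in># S \<Longrightarrow> norm (m - z) \<le> \<rho>\<^sub>S"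
    and T: "\<And>z. z \<in># T \<Longrightarrow> \<rho>\<^sub>T \<le> norm (m - z)" and \<rho>\<^sub>T: "\<rho>\<^sub>T > 0"
    and inner: "(1 + \<rho>\<^sub>S / R) ^ size S \<le> 1 + 1 / (8 * K)"
    and outer: "(1 + R / \<rho>\<^sub>T) ^ size T \<le> 1 + 1 / (8 * K)"
  shows "T_pred (size S) m R K F"
proof -
  define g where "g = (\<Prod>z\<in>#S. [:(m - z) / of_real R, 1:])"
  define h where "h = (\<Prod>z\<in>#T. [:1, of_real R / (m - z):])"
  define c where "c = lead_coeff F * of_real R ^ size S * (\<Prod>z\<in>#T. m - z)"
  have T_ne: "z \<noteq> m" if "z \<in># T" for z using T[OF that] \<rho>\<^sub>T by auto
  have "coeff_norm1 g \<le> 1 + 1 / (8 * K)"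
    using coeff_norm1_inner_factor[of R S m, OF R S] inner by (simp add: g_def)
  moreover have "coeff_norm1 h \<le> 1 + 1 / (8 * K)"
    using coeff_norm1_outer_factor[of R \<rho>\<^sub>T T m, OF R \<rho>\<^sub>T T] outer by (simp add: h_def)
  moreover have "coeff g (size S) = 1"
    using monic_prod_mset_linear[of "\<lambda>z. (m - z) / of_real R" S] by (metis g_def)
  moreover have "coeff h 0 = 1" by (simp add: h_def poly_0_coeff_0[symmetric] poly_prod_mset)
  ultimately have "K * (\<Sum>i\<in>{0..degree F} - {size S}. norm (coeff (g * h) i)) < norm (coeff (g * h) (size S))"
    using K by (intro coeff_mult_dominant[where \<epsilon> = "1 / (8 * K)"]) auto
  moreover have "c \<noteq> 0" using F R T_ne by (fastforce simp: c_def)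
  moreover have "F \<circ>\<^sub>p [:m, of_real R:] = smult c (g * h)"
    unfolding c_def g_def h_def using R T_ne by (intro pcompose_linear_factorization[OF roots]) auto
  ultimately show ?thesis
    unfolding T_pred_iff_coeff_pcompose by (simp add: dominant_coeff_smult_iff del: coeff_smult)
qed

theorem theorem3p2:
  fixes F :: "complex poly" and n k :: nat and K c1 c2 lam r :: real
    and m :: complex and S :: "complex multiset"
  assumes deg: "degree F = n" and n2: "n \<ge> 2"
    and k: "k \<le> n" and K: "K \<ge> 1"
    and c2c1: "c2 * real n * ln ((1 + 2 * K) / (2 * K)) \<ge> c1 * real n"
    and c1: "c1 * real n \<ge> real (max 1 k) / ln (1 + 1 / (8 * K))"
    and r: "r > 0"
    and S_roots: "S \<subseteq># proots F" and S_size: "size S = k"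
    and lam: "lam \<ge> max (4 * c2 * real (max 1 k) * real n ^ 3) (16 * K * real (max 1 k) ^ 2 * real n)"
    and iso: "isolating F S m r 1 lam"
  shows "T_pred k m (c1 * real n * r) K F"
proof -
  have s: "0 < c1 * real n" and inner: "(1 + 1 / (c1 * real n)) ^ k \<le> 1 + 1 / (8 * K)"
    using inner_factor_constant_bound[OF K c1] by auto
  then have "0 < c1" by (simp add: zero_less_mult_iff)
  have "0 < 16 * K * real (max 1 k) ^ 2 * real n" using K n2 by simp
  then have "0 < lam" using lam by linarith
  have "F \<noteq> 0" using deg n2 by auto
  then obtain T where roots: "proots F = S + T" and S: "\<And>z. z \<in># S \<Longrightarrow> norm (m - z) < r"
    and T: "\<And>z. z \<in># T \<Longrightarrow> lam * r \<le> norm (m - z)"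
    using isolating_proots_split[OF iso] by blast
  have "size T \<le> n" using roots size_proots_complex[of F] deg by simp
  then have outer: "(1 + c1 * real n / lam) ^ size T \<le> 1 + 1 / (8 * K)"
    using lam by (intro outer_factor_constant_bound[OF K n2 \<open>0 < c1\<close> c2c1, of k]) auto
  show ?thesis
    unfolding S_size[symmetric]
  proof (rule T_pred_of_proots_split[OF roots \<open>F \<noteq> 0\<close> _ K])
    show "norm (m - z) \<le> r" if "z \<in># S" for z using S[OF that] by simp
    show "(1 + r / (c1 * real n * r)) ^ size S \<le> 1 + 1 / (8 * K)"
      using inner r S_size by simp
    show "(1 + c1 * real n * r / (lam * r)) ^ size T \<le> 1 + 1 / (8 * K)"
      using outer r by simp
  qed (use s r \<open>0 < lam\<close> T in auto)
qed

end
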